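(* Let $\mathcal{A}\in\mathbb{R}^{d_1\times\cdots\times d_k}$ be an order-$k$ real tensor that is $\mathbf{0}_{[k]}$-OD. Then for every partition $\pi\in\mathcal{P}_{[k]}$ with $\pi\ne\mathbf{1}_{[k]}$, \[ \|\mathrm{Unfold}_\pi(\mathcal{A})\|_\sigma=\|\mathcal{A}\|_\sigma . \]
   Context: $\mathcal{P}_{[k]}$ is the set of partitions of $[k]$; $\mathbf{0}_{[k]}=\{\{1\},\dots,\{k\}\}$, $\mathbf{1}_{[k]}=\{[k]\}$. $\mathcal{A}$ is $\mathbf{0}_{[k]}$-OD if $\mathcal{A}=\sum_{n=1}^r\lambda_n\mathbf{a}^{(n)}_1\otimes\cdots\otimes\mathbf{a}^{(n)}_k$ with $\lambda_1\ge\cdots\ge\lambda_r\ge0$, $\mathbf{a}^{(n)}_i\in\mathbb{R}^{d_i}$, and $\langle\mathbf{a}^{(n)}_i,\mathbf{a}^{(m)}_i\rangle=\delta_{nm}$ for all $i\in[k]$, $n,m\in[r]$. For a real tensor $\mathcal{T}\in\mathbb{R}^{e_1\times\cdots\times e_m}$, $\|\mathcal{T}\|_\sigma=\sup\{\sum t_{i_1\dots i_m}x^{(1)}_{i_1}\cdots x^{(m)}_{i_m}:\ \|\mathbf{x}_n\|_2=1\}$. Unfolding: for $\pi=\{B_1,\dots,B_\ell\}$, $\mathrm{Unfold}_\pi(\mathcal{A})$ is the order-$\ell$ tensor of dimensions $(\prod_{j\in B_1}d_j,\dots,\prod_{j\in B_\ell}d_j)$ whose entry at $(m_1,\dots,m_\ell)$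 is $a_{i_1\dots i_k}$, where $m_j$ corresponds to $(i_r)_{r\in B_j}$ under a fixed bijection $\prod_{r\in B_j}[d_r]\to[\prod_{r\in B_j}d_r]$. *)

theory Defs
  imports Main "HOL-Library.Extended_Real"
begin

text \<open>Order-k real tensors of dimensions ds = [d_1,...,d_k] (0-based positions) are
functions on index lists; only entries at valid indices matter.\<close>

definition index_set :: "nat list \<Rightarrow> nat list set" where
  "index_set ds = {is. length is = length ds \<and> (\<forall>j<length ds. is ! j < ds ! j)}"

definition multilin :: "nat list \<Rightarrow> (nat list \<Rightarrow> real) \<Rightarrow> (nat \<Rightarrow> nat \<Rightarrow> real) \<Rightarrow> real" where
  "multilin ds T xs = (\<Sum>is\<in>index_set ds. T is * (\<Prod>j<length ds. xs j (is ! j)))"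

definition spectral_norm :: "nat list \<Rightarrow> (nat list \<Rightarrow> real) \<Rightarrow> real" where
  "spectral_norm ds T = Sup {multilin ds T xs | xs.
      \<forall>j<length ds. (\<Sum>i<ds ! j. (xs j i)\<^sup>2) = 1}"

definition is_partition :: "nat \<Rightarrow> nat set list \<Rightarrow> bool" where
  "is_partition k Bs \<longleftrightarrow> (\<forall>j<length Bs. Bs ! j \<noteq> {}) \<and>
     (\<forall>j<length Bs. \<forall>l<length Bs. j \<noteq> l \<longrightarrow> Bs ! j \<inter> Bs ! l = {}) \<and>
     (\<Union>(set Bs)) = {..<k}"

definition block_of :: "nat set list \<Rightarrow> nat \<Rightarrow> nat" where
  "block_of Bs r = (THE j. j < length Bs \<and> r \<in> Bs ! j)"

definition unfold_dims :: "nat list \<Rightarrow> nat set list \<Rightarrow> nat list" where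
  "unfold_dims ds Bs = map (\<lambda>B. \<Prod>r\<in>B. ds ! r) Bs"

text \<open>Unfolding: the fixed bijection prod_{r in B}[d_r] -> [prod_{r in B} d_r] is the
mixed-radix encoding m = sum_{r in B} i_r * prod_{s in B, s<r} d_s; its inverse
recovers i_r = (m div prod_{s in B, s<r} d_s) mod d_r.\<close>
definition unfold :: "nat list \<Rightarrow> nat set list \<Rightarrow> (nat list \<Rightarrow> real) \<Rightarrow> (nat list \<Rightarrow> real)" where
  "unfold ds Bs A = (\<lambda>ms. A (map (\<lambda>r. (ms ! block_of Bs r div
        (\<Prod>s\<in>(Bs ! block_of Bs r) \<inter> {..<r}. ds ! s)) mod ds ! r) [0..<length ds]))"

definition zero_OD :: "nat list \<Rightarrow> (nat list \<Rightarrow> real) \<Rightarrow> bool" where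
  "zero_OD ds A \<longleftrightarrow> (\<exists>(r::nat) (lam::nat \<Rightarrow> real) (a::nat \<Rightarrow> nat \<Rightarrow> nat \<Rightarrow> real).
     (\<forall>n m. n \<le> m \<longrightarrow> m < r \<longrightarrow> lam m \<le> lam n) \<and> (\<forall>n<r. 0 \<le> lam n) \<and>
     (\<forall>i<length ds. \<forall>n<r. \<forall>m<r.
        (\<Sum>t<ds ! i. a n i t * a m i t) = (if n = m then 1 else 0)) \<and>
     (\<forall>is\<in>index_set ds. A is = (\<Sum>n<r. lam n * (\<Prod>i<length ds. a n i (is ! i)))))"

end

theory Submission
  imports Defs
begin

text \<open>If \<open>A = \<Sum>\<^sub>n \<lambda>\<^sub>n a\<^sub>n\<^sub>1 \<otimes> \<dots> \<otimes> a\<^sub>n\<^sub>k\<close> with orthonormal families \<open>(a\<^sub>n\<^sub>j)\<^sub>n\<close> and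
\<open>\<lambda>\<^sub>1 \<ge> \<lambda>\<^sub>2 \<ge> \<dots> \<ge> 0\<close>, and \<open>k \<ge> 2\<close>, then \<open>\<parallel>A\<parallel>\<^sub>\<sigma> = \<lambda>\<^sub>1\<close>: the value \<open>\<lambda>\<^sub>1\<close> is attained at
\<open>x\<^sub>j = a\<^sub>1\<^sub>j\<close>, and for unit vectors \<open>x\<^sub>j\<close> the coefficients \<open>c\<^sub>n\<^sub>j = \<langle>a\<^sub>n\<^sub>j, x\<^sub>j\<rangle>\<close> satisfy
Bessel's inequality \<open>\<Sum>\<^sub>n c\<^sub>n\<^sub>j\<^sup>2 \<le> 1\<close>, whence by AM-GM
\<open>\<Sum>\<^sub>n \<lambda>\<^sub>n \<Prod>\<^sub>j c\<^sub>n\<^sub>j \<le> \<lambda>\<^sub>1 \<Sum>\<^sub>n |c\<^sub>n\<^sub>1| |c\<^sub>n\<^sub>2| \<le> \<lambda>\<^sub>1\<close>.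
Unfolding along a partition \<open>\<pi>\<close> with at least two blocks yields a decomposition of the same kind
with the same weights: for a block \<open>B\<close>, the new factors are the Kronecker products of the
\<open>a\<^sub>n\<^sub>r\<close>, \<open>r \<in> B\<close>, and inner products of Kronecker products factor, so they are again orthonormal.\<close>

definition orth_decomposition ::
    "nat list \<Rightarrow> nat \<Rightarrow> (nat \<Rightarrow> real) \<Rightarrow> (nat \<Rightarrow> nat \<Rightarrow> nat \<Rightarrow> real) \<Rightarrow> (nat list \<Rightarrow> real) \<Rightarrow> bool" where
  "orth_decomposition es r lam a T \<longleftrightarrow>
     (\<forall>n m. n \<le> m \<longrightarrow> m < r \<longrightarrow> lam m \<le> lam n) \<and> (\<forall>n<r. 0 \<le> lam n) \<and>
     (\<forall>j<length es. \<forall>n<r. \<forall>m<r. (\<Sum>t<es ! j. a n j t * a m j t) = (if n = m then 1 else 0)) \<and>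
     (\<forall>is\<in>index_set es. T is = (\<Sum>n<r. lam n * (\<Prod>j<length es. a n j (is ! j))))"

lemma zero_OD_iff_orth_decomposition:
  "zero_OD ds A \<longleftrightarrow> (\<exists>r lam a. orth_decomposition ds r lam a A)"
  unfolding zero_OD_def orth_decomposition_def ..

lemma index_set_Nil: "index_set [] = {[]}"
  by (auto simp: index_set_def)

lemma index_set_Cons: "index_set (d # es) = (\<lambda>(t, is). t # is) ` ({..<d} \<times> index_set es)"
proof (rule set_eqI)
  fix xs
  show "xs \<in> index_set (d # es) \<longleftrightarrow> xs \<in> (\<lambda>(t, is). t # is) ` ({..<d} \<times> index_set es)"
  proof
    assume xs: "xs \<in> index_set (d # es)"
    then obtain t ys where "xs = t # ys" by (cases xs) (auto simp: index_set_def)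
    with xs show "xs \<in> (\<lambda>(t, is). t # is) ` ({..<d} \<times> index_set es)"
      by (force simp: index_set_def)
  next
    assume "xs \<in> (\<lambda>(t, is). t # is) ` ({..<d} \<times> index_set es)"
    then obtain t ys where "xs = t # ys" "t < d" "ys \<in> index_set es" by auto
    then show "xs \<in> index_set (d # es)" by (auto simp: index_set_def nth_Cons split: nat.splits)
  qed
qed

lemma sum_index_set_prod:
  fixes g :: "nat \<Rightarrow> nat \<Rightarrow> 'a::comm_semiring_1"
  shows "(\<Sum>is\<in>index_set es. \<Prod>j<length es. g j (is ! j)) = (\<Prod>j<length es. \<Sum>t<es ! j. g j t)"
proof (induction es arbitrary: g)
  case Nil
  then show ?case by (simp add: index_set_Nil)
next
  case (Cons d es)
  have inj: "inj_on (\<lambda>(t, is). t # is) ({..<d} \<times> index_set es)" by (auto simp: inj_on_def)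
  have "(\<Sum>is\<in>index_set (d # es). \<Prod>j<length (d # es). g j (is ! j))
      = (\<Sum>(t, is)\<in>{..<d} \<times> index_set es. g 0 t * (\<Prod>j<length es. g (Suc j) (is ! j)))"
    unfolding index_set_Cons sum.reindex[OF inj]
    by (intro sum.cong refl) (auto simp del: prod.lessThan_Suc simp add: prod.lessThan_Suc_shift)
  also have "\<dots> = (\<Sum>t<d. g 0 t * (\<Sum>is\<in>index_set es. \<Prod>j<length es. g (Suc j) (is ! j)))"
    by (simp add: sum.cartesian_product[symmetric] sum_distrib_left)
  also have "\<dots> = (\<Sum>t<d. g 0 t) * (\<Prod>j<length es. \<Sum>t<es ! j. g (Suc j) t)"
    using Cons.IH[of "\<lambda>j. g (Suc j)"] by (simp add: sum_distrib_right)
  also have "\<dots> = (\<Prod>j<length (d # es). \<Sum>t<(d # es) ! j. g j t)"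
    by (simp del: prod.lessThan_Suc add: prod.lessThan_Suc_shift)
  finally show ?case .
qed

lemma multilin_orth_decomposition:
  assumes "orth_decomposition es r lam a T"
  shows "multilin es T xs = (\<Sum>n<r. lam n * (\<Prod>j<length es. \<Sum>t<es ! j. a n j t * xs j t))"
proof -
  have T: "\<forall>is\<in>index_set es. T is = (\<Sum>n<r. lam n * (\<Prod>j<length es. a n j (is ! j)))"
    using assms by (simp add: orth_decomposition_def)
  have "multilin es T xs = (\<Sum>is\<in>index_set es.
      (\<Sum>n<r. lam n * (\<Prod>j<length es. a n j (is ! j))) * (\<Prod>j<length es. xs j (is ! j)))"
    unfolding multilin_def using T by (intro sum.cong refl) simp
  also have "\<dots> = (\<Sum>n<r. lam n * (\<Sum>is\<in>index_set es. \<Prod>j<length es. a n j (is ! j) * xs j (is ! j)))"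
    by (simp add: sum_distrib_right sum_distrib_left prod.distrib mult_ac sum.swap[of _ "index_set es"])
  also have "\<dots> = (\<Sum>n<r. lam n * (\<Prod>j<length es. \<Sum>t<es ! j. a n j t * xs j t))"
    by (simp add: sum_index_set_prod[where g = "\<lambda>j t. a _ j t * xs j t"])
  finally show ?thesis .
qed

subsection \<open>The spectral norm of an orthogonally decomposable tensor\<close>

lemma bessel_inequality:
  fixes b :: "nat \<Rightarrow> nat \<Rightarrow> real" and x :: "nat \<Rightarrow> real"
  assumes orth: "\<forall>n<r. \<forall>m<r. (\<Sum>t<N. b n t * b m t) = (if n = m then 1 else 0)"
  shows "(\<Sum>n<r. (\<Sum>t<N. b n t * x t)\<^sup>2) \<le> (\<Sum>t<N. (x t)\<^sup>2)"
proof -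
  define c where "c n = (\<Sum>t<N. b n t * x t)" for n
  define p where "p t = (\<Sum>n<r. c n * b n t)" for t
  have "(\<Sum>t<N. x t * p t) = (\<Sum>t<N. \<Sum>n<r. c n * (b n t * x t))"
    unfolding p_def by (simp add: sum_distrib_left mult_ac)
  also have "\<dots> = (\<Sum>n<r. c n * (\<Sum>t<N. b n t * x t))"
    by (subst sum.swap) (simp add: sum_distrib_left)
  also have "\<dots> = (\<Sum>n<r. (c n)\<^sup>2)"
    by (simp add: c_def power2_eq_square)
  finally have cross: "(\<Sum>t<N. x t * p t) = (\<Sum>n<r. (c n)\<^sup>2)" .
  have "(\<Sum>t<N. (p t)\<^sup>2) = (\<Sum>t<N. \<Sum>n<r. \<Sum>m<r. c n * c m * (b n t * b m t))"
    unfolding p_def by (simp add: power2_eq_square sum_distrib_left sum_distrib_right mult_ac)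
  also have "\<dots> = (\<Sum>n<r. \<Sum>m<r. c n * c m * (\<Sum>t<N. b n t * b m t))"
    by (simp add: sum_distrib_left sum.swap[of _ "{..<N}"])
  also have "\<dots> = (\<Sum>n<r. \<Sum>m<r. c n * c m * (if n = m then 1 else 0))"
    using orth by (intro sum.cong refl) simp
  also have "\<dots> = (\<Sum>n<r. (c n)\<^sup>2)"
    by (simp add: power2_eq_square if_distrib cong: if_cong)
  finally have square: "(\<Sum>t<N. (p t)\<^sup>2) = (\<Sum>n<r. (c n)\<^sup>2)" .
  have "0 \<le> (\<Sum>t<N. (x t - p t)\<^sup>2)" by (rule sum_nonneg) simp
  also have "\<dots> = (\<Sum>t<N. (x t)\<^sup>2) - 2 * (\<Sum>t<N. x t * p t) + (\<Sum>t<N. (p t)\<^sup>2)"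
    by (simp add: power2_diff sum.distrib sum_subtractf sum_distrib_left mult_ac)
  finally show ?thesis using cross square unfolding c_def by simp
qed

lemma prod_abs_le_first_two:
  fixes c :: "nat \<Rightarrow> real"
  assumes "2 \<le> l" "\<forall>j<l. \<bar>c j\<bar> \<le> 1"
  shows "(\<Prod>j<l. \<bar>c j\<bar>) \<le> \<bar>c 0\<bar> * \<bar>c 1\<bar>"
  using assms
proof (induction l rule: dec_induct)
  case base
  then show ?case by (simp add: numeral_2_eq_2)
next
  case (step m)
  have "(\<Prod>j<Suc m. \<bar>c j\<bar>) \<le> (\<Prod>j<m. \<bar>c j\<bar>)"
    using step.prems by (simp, intro mult_left_le) (auto intro: prod_nonneg)
  with step show ?case by auto
qed

lemma weighted_sum_prod_le:
  fixes c :: "nat \<Rightarrow> nat \<Rightarrow> real"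
  assumes "2 \<le> l"
    and mono: "\<forall>n m. n \<le> m \<longrightarrow> m < r \<longrightarrow> lam m \<le> lam n" and nonneg: "\<forall>n<r. 0 \<le> lam n"
    and bessel: "\<And>j. j < l \<Longrightarrow> (\<Sum>n<r. (c n j)\<^sup>2) \<le> 1"
  shows "(\<Sum>n<r. lam n * (\<Prod>j<l. c n j)) \<le> (if r = 0 then 0 else lam 0)"
proof (cases "r = 0")
  case False
  have abs_le_1: "\<bar>c n j\<bar> \<le> 1" if "j < l" "n < r" for n j
  proof -
    have "(c n j)\<^sup>2 \<le> (\<Sum>n<r. (c n j)\<^sup>2)" using that by (intro member_le_sum) auto
    with bessel[OF that(1)] have "(c n j)\<^sup>2 \<le> 1" by linarith
    then show ?thesis by (simp add: abs_square_le_1)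
  qed
  have am_gm: "\<bar>u\<bar> * \<bar>v\<bar> \<le> (u\<^sup>2 + v\<^sup>2) / 2" for u v :: real
    using sum_squares_bound[of "\<bar>u\<bar>" "\<bar>v\<bar>"] by simp
  have "(\<Sum>n<r. lam n * (\<Prod>j<l. c n j)) \<le> (\<Sum>n<r. lam 0 * (\<bar>c n 0\<bar> * \<bar>c n 1\<bar>))"
  proof (rule sum_mono)
    fix n assume n: "n \<in> {..<r}"
    have "lam n * (\<Prod>j<l. c n j) \<le> lam n * (\<Prod>j<l. \<bar>c n j\<bar>)"
      using nonneg n by (intro mult_left_mono) (auto simp: abs_prod[symmetric])
    also have "\<dots> \<le> lam n * (\<bar>c n 0\<bar> * \<bar>c n 1\<bar>)"
      using nonneg n abs_le_1 \<open>2 \<le> l\<close> by (intro mult_left_mono prod_abs_le_first_two) auto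
    also have "\<dots> \<le> lam 0 * (\<bar>c n 0\<bar> * \<bar>c n 1\<bar>)"
      using mono n by (intro mult_right_mono) auto
    finally show "lam n * (\<Prod>j<l. c n j) \<le> lam 0 * (\<bar>c n 0\<bar> * \<bar>c n 1\<bar>)" .
  qed
  also have "\<dots> \<le> lam 0 * (\<Sum>n<r. ((c n 0)\<^sup>2 + (c n 1)\<^sup>2) / 2)"
    unfolding sum_distrib_left[symmetric] using nonneg False am_gm
    by (intro mult_left_mono sum_mono) auto
  also have "\<dots> \<le> lam 0"
    using bessel[of 0] bessel[of 1] \<open>2 \<le> l\<close> nonneg False
    by (intro mult_left_le) (auto simp: sum.distrib sum_divide_distrib[symmetric])
  finally show ?thesis using False by simp
qed simp

lemma spectral_norm_orth_decomposition:
  assumes "2 \<le> length es" and pos: "\<forall>j<length es. 0 < es ! j"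
    and od: "orth_decomposition es r lam b T"
  shows "spectral_norm es T = (if r = 0 then 0 else lam 0)"
proof -
  have mono: "\<forall>n m. n \<le> m \<longrightarrow> m < r \<longrightarrow> lam m \<le> lam n" and nonneg: "\<forall>n<r. 0 \<le> lam n"
    and orth: "\<forall>j<length es. \<forall>n<r. \<forall>m<r. (\<Sum>t<es ! j. b n j t * b m j t) = (if n = m then 1 else 0)"
    using od by (simp_all add: orth_decomposition_def)
  define unit where "unit xs \<longleftrightarrow> (\<forall>j<length es. (\<Sum>i<es ! j. (xs j i)\<^sup>2) = 1)"
    for xs :: "nat \<Rightarrow> nat \<Rightarrow> real"
  define L where "L = (if r = 0 then 0 else lam 0)"
  have upper: "multilin es T xs \<le> L" if "unit xs" for xs
    unfolding multilin_orth_decomposition[OF od] L_def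
    using \<open>2 \<le> length es\<close> mono nonneg
  proof (rule weighted_sum_prod_le)
    fix j assume "j < length es"
    then show "(\<Sum>n<r. (\<Sum>t<es ! j. b n j t * xs j t)\<^sup>2) \<le> 1"
      using bessel_inequality[where b = "\<lambda>n t. b n j t" and x = "xs j" and N = "es ! j"] orth \<open>unit xs\<close>
      by (simp add: unit_def)
  qed
  have attained: "\<exists>xs. unit xs \<and> multilin es T xs = L"
  proof (cases "r = 0")
    case True
    define xs where "xs j t = (if t = 0 then 1 else 0 :: real)" for j t :: nat
    have "(\<Sum>i<es ! j. (xs j i)\<^sup>2) = 1" if "j < length es" for j
      unfolding xs_def using pos that
      by (subst sum.cong[OF refl, where h = "\<lambda>i. if i = 0 then 1 else 0"]) auto
    then have "unit xs" by (simp add: unit_def)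
    then show ?thesis using True by (auto simp: multilin_orth_decomposition[OF od] L_def)
  next
    case False
    have "unit (b 0)" using orth False by (auto simp: unit_def power2_eq_square)
    have "multilin es T (b 0) = (\<Sum>n<r. lam n * (\<Prod>j<length es. if n = 0 then 1 else 0))"
      unfolding multilin_orth_decomposition[OF od] using orth False
      by (intro sum.cong refl arg_cong2[where f = "(*)"] prod.cong) auto
    also have "\<dots> = (\<Sum>n<r. if n = 0 then lam 0 else 0)"
      using \<open>2 \<le> length es\<close> by (intro sum.cong refl) auto
    also have "\<dots> = L" using False by (simp add: L_def)
    finally show ?thesis using \<open>unit (b 0)\<close> by blast
  qed
  have "Sup {multilin es T xs | xs. unit xs} = L"
    using upper attained by (intro cSup_eq_maximum) auto
  then show ?thesis unfolding spectral_norm_def unit_def L_def .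
qed

lemma spectral_norm_Nil: "spectral_norm [] T = T []"
  by (simp add: spectral_norm_def multilin_def index_set_Nil)

subsection \<open>Mixed-radix indices\<close>

lemma sum_lessThan_mult:
  fixes g :: "nat \<Rightarrow> 'a::comm_monoid_add"
  shows "(\<Sum>m<k * Q. g m) = (\<Sum>t<k. \<Sum>m<Q. g (m + t * Q))"
proof -
  have "sum g {t * Q..<t * Q + Q} = (\<Sum>m<Q. g (m + t * Q))" for t
    using sum.shift_bounds_nat_ivl[of g 0 "t * Q" Q] by (simp add: atLeast0LessThan add.commute)
  then show ?thesis by (simp add: sum.nat_group[symmetric])
qed

definition digit :: "nat set \<Rightarrow> (nat \<Rightarrow> nat) \<Rightarrow> nat \<Rightarrow> nat \<Rightarrow> nat" where
  "digit B d r m = (m div (\<Prod>s\<in>B \<inter> {..<r}. d s)) mod d r"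

lemma digit_insert_max:
  assumes "finite B" "\<forall>s\<in>B. s < M" "\<forall>s\<in>insert M B. 0 < d s"
    and "m < (\<Prod>s\<in>B. d s)" "t < d M"
  shows "digit (insert M B) d M (m + (\<Prod>s\<in>B. d s) * t) = t"
    and "r \<in> B \<Longrightarrow> digit (insert M B) d r (m + (\<Prod>s\<in>B. d s) * t) = digit B d r m"
proof -
  have "insert M B \<inter> {..<M} = B" using assms(2) by auto
  then show "digit (insert M B) d M (m + (\<Prod>s\<in>B. d s) * t) = t"
    using assms(4,5) by (simp add: digit_def)
  assume r: "r \<in> B"
  define Q where "Q = (\<Prod>s\<in>B. d s)"
  define p where "p = (\<Prod>s\<in>B \<inter> {..<r}. d s)"
  define q where "q = (\<Prod>s\<in>B \<inter> {r<..}. d s)"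
  have "B = (B \<inter> {..<r}) \<union> insert r (B \<inter> {r<..})" using r by auto
  then have "Q = p * (d r * q)"
    unfolding Q_def p_def q_def by (subst (1) \<open>B = _\<close>, subst prod.union_disjoint) (use assms(1) in auto)
  moreover have "0 < p" unfolding p_def using assms(3) by (simp add: prod_pos)
  ultimately have "(m + Q * t) div p = m div p + d r * (q * t)" by (simp add: mult.assoc)
  moreover have "insert M B \<inter> {..<r} = B \<inter> {..<r}" using assms(2) r by auto
  ultimately show "digit (insert M B) d r (m + (\<Prod>s\<in>B. d s) * t) = digit B d r m"
    unfolding digit_def Q_def p_def by simp
qed

lemma sum_prod_digit:
  fixes f :: "nat \<Rightarrow> nat \<Rightarrow> 'a::comm_semiring_1"
  assumes "finite B" "\<forall>r\<in>B. 0 < d r"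
  shows "(\<Sum>m<(\<Prod>r\<in>B. d r). \<Prod>r\<in>B. f r (digit B d r m)) = (\<Prod>r\<in>B. \<Sum>t<d r. f r t)"
  using assms
proof (induction B rule: finite_linorder_max_induct)
  case empty
  then show ?case by simp
next
  case (insert M B)
  define Q where "Q = (\<Prod>r\<in>B. d r)"
  have "M \<notin> B" using insert.hyps(2) by auto
  have "(\<Sum>m<(\<Prod>r\<in>insert M B. d r). \<Prod>r\<in>insert M B. f r (digit (insert M B) d r m))
      = (\<Sum>t<d M. \<Sum>m<Q. \<Prod>r\<in>insert M B. f r (digit (insert M B) d r (m + Q * t)))"
    using \<open>M \<notin> B\<close> insert.hyps(1) by (simp add: Q_def sum_lessThan_mult mult.commute)
  also have "\<dots> = (\<Sum>t<d M. \<Sum>m<Q. f M t * (\<Prod>r\<in>B. f r (digit B d r m)))"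
    using insert \<open>M \<notin> B\<close> digit_insert_max[of B M d]
    by (intro sum.cong refl) (simp add: Q_def)
  also have "\<dots> = (\<Prod>r\<in>insert M B. \<Sum>t<d r. f r t)"
    using insert \<open>M \<notin> B\<close>
    by (simp add: Q_def sum_distrib_left[symmetric] sum_distrib_right)
  finally show ?case .
qed

lemma partition_block_subset:
  assumes "is_partition k Bs" "j < length Bs"
  shows "Bs ! j \<subseteq> {..<k}"
  using assms nth_mem unfolding is_partition_def by blast

lemma block_of_eqI:
  assumes "is_partition k Bs" "j < length Bs" "r \<in> Bs ! j"
  shows "block_of Bs r = j"
  unfolding block_of_def
proof (rule the_equality)
  fix j' assume "j' < length Bs \<and> r \<in> Bs ! j'"
  then show "j' = j" using assms unfolding is_partition_def by blast
qed (use assms in simp)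

lemma partition_UN_blocks:
  assumes "is_partition k Bs"
  shows "{..<k} = (\<Union>j<length Bs. Bs ! j)"
proof -
  have "set Bs = (!) Bs ` {..<length Bs}" by (auto simp: set_conv_nth)
  with assms show ?thesis by (simp add: is_partition_def)
qed

lemma finite_partition_block:
  assumes "is_partition k Bs" "j < length Bs"
  shows "finite (Bs ! j)"
  by (rule finite_subset[OF partition_block_subset[OF assms]]) simp

lemma prod_partition:
  assumes "is_partition k Bs"
  shows "(\<Prod>i<k. f i) = (\<Prod>j<length Bs. \<Prod>i\<in>Bs ! j. f i)"
  using assms finite_partition_block[OF assms]
  by (simp add: partition_UN_blocks[OF assms] prod.UNION_disjoint is_partition_def)

lemma length_partition_le:
  assumes "is_partition k Bs"
  shows "length Bs \<le> k"
proof -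
  have "length Bs = (\<Sum>j<length Bs. 1)" by simp
  also have "\<dots> \<le> (\<Sum>j<length Bs. card (Bs ! j))"
    using assms finite_partition_block[OF assms]
    by (intro sum_mono) (auto simp: is_partition_def Suc_le_eq card_gt_0_iff)
  also have "\<dots> = card (\<Union>j<length Bs. Bs ! j)"
    using assms finite_partition_block[OF assms]
    by (simp add: card_UN_disjoint is_partition_def)
  finally show ?thesis by (simp add: partition_UN_blocks[OF assms, symmetric])
qed

lemma two_le_length_partition:
  assumes "is_partition k Bs" "0 < k" "set Bs \<noteq> {{..<k}}"
  shows "2 \<le> length Bs"
proof (rule ccontr)
  assume "\<not> 2 \<le> length Bs"
  then consider "Bs = []" | B where "Bs = [B]" by (cases Bs; cases "tl Bs") auto
  then show False
    using assms by cases (auto simp: is_partition_def)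
qed

subsection \<open>Unfolding along a partition\<close>

lemma unfold_dims_pos:
  assumes "\<forall>i<length ds. 0 < ds ! i" "is_partition (length ds) Bs"
  shows "\<forall>j<length (unfold_dims ds Bs). 0 < unfold_dims ds Bs ! j"
  using assms partition_block_subset[OF assms(2)] by (auto simp: unfold_dims_def prod_pos subset_iff)

definition unfold_factor ::
    "nat list \<Rightarrow> nat set list \<Rightarrow> (nat \<Rightarrow> nat \<Rightarrow> nat \<Rightarrow> real) \<Rightarrow> nat \<Rightarrow> nat \<Rightarrow> nat \<Rightarrow> real" where
  "unfold_factor ds Bs a n j m = (\<Prod>r\<in>Bs ! j. a n r (digit (Bs ! j) ((!) ds) r m))"

lemma orth_decomposition_unfold:
  assumes pos: "\<forall>i<length ds. 0 < ds ! i" and part: "is_partition (length ds) Bs"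
    and od: "orth_decomposition ds r lam a A"
  shows "orth_decomposition (unfold_dims ds Bs) r lam (unfold_factor ds Bs a) (unfold ds Bs A)"
proof -
  let ?es = "unfold_dims ds Bs" and ?b = "unfold_factor ds Bs a"
  have orth: "\<forall>i<length ds. \<forall>n<r. \<forall>m<r. (\<Sum>t<ds ! i. a n i t * a m i t) = (if n = m then 1 else 0)"
    and dec: "\<forall>is\<in>index_set ds. A is = (\<Sum>n<r. lam n * (\<Prod>i<length ds. a n i (is ! i)))"
    using od by (simp_all add: orth_decomposition_def)
  have "(\<Sum>t<?es ! j. ?b n j t * ?b m j t) = (if n = m then 1 else 0)"
    if j: "j < length Bs" and "n < r" "m < r" for j n m
  proof -
    have sub: "Bs ! j \<subseteq> {..<length ds}" by (rule partition_block_subset[OF part j])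
    have "(\<Sum>t<?es ! j. ?b n j t * ?b m j t) = (\<Sum>t<(\<Prod>s\<in>Bs ! j. ds ! s).
        \<Prod>s\<in>Bs ! j. (\<lambda>s t. a n s t * a m s t) s (digit (Bs ! j) ((!) ds) s t))"
      using j by (simp add: unfold_dims_def unfold_factor_def prod.distrib)
    also have "\<dots> = (\<Prod>s\<in>Bs ! j. \<Sum>t<ds ! s. a n s t * a m s t)"
      using finite_partition_block[OF part j] sub pos by (intro sum_prod_digit) auto
    also have "\<dots> = (\<Prod>s\<in>Bs ! j. if n = m then 1 else 0)"
      using sub orth that by (intro prod.cong refl) auto
    also have "\<dots> = (if n = m then 1 else 0)"
      \<comment> \<open>here the blocks must be nonempty\<close>
      using finite_partition_block[OF part j] part j by (simp add: is_partition_def card_gt_0_iff)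
    finally show ?thesis .
  qed
  moreover have "unfold ds Bs A ms = (\<Sum>n<r. lam n * (\<Prod>j<length ?es. ?b n j (ms ! j)))"
    for ms
  proof -
    define idx where "idx = map (\<lambda>i. digit (Bs ! block_of Bs i) ((!) ds) i (ms ! block_of Bs i))
        [0..<length ds]"
    have "idx \<in> index_set ds" using pos by (simp add: idx_def index_set_def digit_def)
    moreover have "(\<Prod>i<length ds. a n i (idx ! i)) = (\<Prod>j<length ?es. ?b n j (ms ! j))" for n
      using block_of_eqI[OF part]
      by (simp add: prod_partition[OF part] idx_def unfold_dims_def unfold_factor_def
          partition_block_subset[OF part, THEN subsetD])
    ultimately show ?thesis using dec by (simp add: unfold_def idx_def digit_def)
  qed
  ultimately show ?thesis using od by (simp add: orth_decomposition_def unfold_dims_def)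
qed

theorem corollary5p6:
  fixes ds :: "nat list" and A :: "nat list \<Rightarrow> real" and Bs :: "nat set list"
  assumes "\<forall>i<length ds. 1 \<le> ds ! i"
    and "zero_OD ds A"
    and "is_partition (length ds) Bs"
    and "set Bs \<noteq> {{..<length ds}}"
  shows "spectral_norm (unfold_dims ds Bs) (unfold ds Bs A) = spectral_norm ds A"
proof (cases "length ds = 0")
  case True
  then have "Bs = []" using length_partition_le[OF assms(3)] by simp
  with True show ?thesis by (simp add: spectral_norm_Nil unfold_dims_def unfold_def)
next
  case False
  have pos: "\<forall>i<length ds. 0 < ds ! i" using assms(1) by (simp add: Suc_le_eq)
  obtain r lam a where od: "orth_decomposition ds r lam a A"
    using assms(2) zero_OD_iff_orth_decomposition by blast
  have "2 \<le> length Bs" using two_le_length_partition assms(3,4) False by simp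
  moreover have "length Bs \<le> length ds" by (rule length_partition_le[OF assms(3)])
  ultimately have "spectral_norm ds A = (if r = 0 then 0 else lam 0)"
    using spectral_norm_orth_decomposition pos od by simp
  moreover have "spectral_norm (unfold_dims ds Bs) (unfold ds Bs A) = (if r = 0 then 0 else lam 0)"
    using \<open>2 \<le> length Bs\<close> unfold_dims_pos[OF pos assms(3)]
      orth_decomposition_unfold[OF pos assms(3) od]
    by (intro spectral_norm_orth_decomposition) (auto simp: unfold_dims_def)
  ultimately show ?thesis by simp
qed

end
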